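(* Let $\phi$ be a partial listing of $A$ and let $\alpha'=\alpha_k\cdots\alpha_{l+1}$ be a prefix of $A$ (with $2\le l+1\le k$). Then (1) $\alpha'$ is non-empty if and only if $\phi(\alpha'0\cdots0)=1$; and (2) $\alpha'$ is full if and only if $\phi(\alpha'(a_l-1)(a_{l-1}-1)\cdots(a_2-1))=1$.
   Context: Let $k\ge 2$ and let $a_k,\dots,a_2$ be positive integers with $a_2\le a_i$ for all $2<i\le k$. Let $A=[a_k]\times\cdots\times[a_2]$, where $[a]=\{0,\dots,a-1\}$; elements are written $\alpha=\alpha_k\alpha_{k-1}\cdots\alpha_2$. A prefix of $\alpha$ is $\alpha_k\cdots\alpha_{l+1}$ for some $2\le l+1\le k$; $\varnothing$ denotes the empty prefix; for a tuple $\beta=\alpha_k\cdots\alpha_{l+1}$ and $i$, $\beta i$ denotes $\alpha_k\cdots\alpha_{l+1}i$. An array $\phi:A\to\{0,1\}$ is initialized to $0$ everywhere. A tuple $\beta$ (a prefix or an element) is non-empty if some $\alpha\in A$ having $\beta$ as a prefix (or equal to $\beta$) has $\phi(\alpha)=1$, empty otherwise, and full if all such $\alpha$ have $\phi(\alpha)=1$. The procedure Next$(\beta)$, for $\beta=\alpha_k\cdots\alpha_{l+1}$ (with $l=k$ for $\beta=\varnothing$): let $m$ be the least $i$ such that $\beta i$ is empty; if $l=2$, set $\phi(\beta m):=1$ and stop; otherwise, if $m\ge a_2$, replace $m$ by the least $i$ such that $\beta i$ is not full; then call Next$(\beta m)$. A partial listing of $A$ is an array $\phi$ obtained from the all-zero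 array by finitely many calls of Next$(\varnothing)$. *)

theory Defs
  imports Main
begin

text \<open>Elements of A = [a_k] x ... x [a_2] are lists [alpha_k, ..., alpha_2] of length k-1;
  position j of the list holds coordinate k-j, bounded by a (k-j).
  An array phi is a function on lists (True means 1); only its values on A matter.\<close>

definition inA :: "(nat \<Rightarrow> nat) \<Rightarrow> nat \<Rightarrow> nat list \<Rightarrow> bool" where
  "inA a k xs \<longleftrightarrow> length xs = k - 1 \<and> (\<forall>j < k - 1. xs ! j < a (k - j))"

definition nonempty_tuple :: "(nat \<Rightarrow> nat) \<Rightarrow> nat \<Rightarrow> (nat list \<Rightarrow> bool) \<Rightarrow> nat list \<Rightarrow> bool" where
  "nonempty_tuple a k phi b \<longleftrightarrow> (\<exists>x. inA a k x \<and> take (length b) x = b \<and> phi x)"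

definition full_tuple :: "(nat \<Rightarrow> nat) \<Rightarrow> nat \<Rightarrow> (nat list \<Rightarrow> bool) \<Rightarrow> nat list \<Rightarrow> bool" where
  "full_tuple a k phi b \<longleftrightarrow> (\<forall>x. inA a k x \<and> take (length b) x = b \<longrightarrow> phi x)"

text \<open>next_call a k b phi phi': calling Next(b) on array phi terminates with array phi'.
  The level is l = k - length b. The least i with b i empty always exists (i \<ge> a_l is
  vacuously empty); the least i with b i not full is required to exist when it is used.\<close>

inductive next_call :: "(nat \<Rightarrow> nat) \<Rightarrow> nat \<Rightarrow> nat list \<Rightarrow> (nat list \<Rightarrow> bool) \<Rightarrow> (nat list \<Rightarrow> bool) \<Rightarrow> bool"
  for a :: "nat \<Rightarrow> nat" and k :: nat where
  base: "k - length b = 2 \<Longrightarrow>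
         m = (LEAST i. \<not> nonempty_tuple a k phi (b @ [i])) \<Longrightarrow>
         next_call a k b phi (phi((b @ [m]) := True))"
| step: "k - length b > 2 \<Longrightarrow>
         m0 = (LEAST i. \<not> nonempty_tuple a k phi (b @ [i])) \<Longrightarrow>
         (m0 \<ge> a 2 \<longrightarrow> (\<exists>i. \<not> full_tuple a k phi (b @ [i]))) \<Longrightarrow>
         m = (if m0 \<ge> a 2 then (LEAST i. \<not> full_tuple a k phi (b @ [i])) else m0) \<Longrightarrow>
         next_call a k (b @ [m]) phi phi' \<Longrightarrow>
         next_call a k b phi phi'"

definition partial_listing :: "(nat \<Rightarrow> nat) \<Rightarrow> nat \<Rightarrow> (nat list \<Rightarrow> bool) \<Rightarrow> bool" where
  "partial_listing a k phi \<longleftrightarrow> (next_call a k [])\<^sup>*\<^sup>* (\<lambda>_. False) phi"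

end

theory Submission
  imports Defs
begin

text \<open>The children \<open>\<beta>0, \<beta>1, \<dots>\<close> of a prefix \<open>\<beta>\<close> stay ordered throughout any partial listing:
  if \<open>\<beta>(j+1)\<close> is non-empty (full) then so is \<open>\<beta>j\<close>. A call Next(\<open>\<beta>\<close>) inserts a single element
  below \<open>\<beta>\<close>, so the only sibling pair it can disturb at its own level is \<open>\<beta>(m-1), \<beta>m\<close>.
  If \<open>m\<close> is the least empty child, then \<open>m < a\<^sub>2 \<le> a\<^sub>l\<close>, \<open>\<beta>(m-1)\<close> is non-empty, and \<open>\<beta>m\<close>,
  whose last coordinate takes \<open>a\<^sub>2 \<ge> 2\<close> values, cannot become full by one insertion;
  otherwise \<open>m\<close> is the least non-full child and \<open>\<beta>(m-1)\<close> was full already. Given this order,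
  a prefix is non-empty iff its first child is and full iff its last child is, and descending
  to the leaves yields the corollary.\<close>

definition prefixA :: "(nat \<Rightarrow> nat) \<Rightarrow> nat \<Rightarrow> nat list \<Rightarrow> bool" where
  "prefixA a k c \<longleftrightarrow> (\<exists>x. inA a k x \<and> take (length c) x = c)"

lemma take_length_snoc: "take (Suc (length c)) y = c @ [i] \<Longrightarrow> take (length c) y = c"
  by (drule arg_cong[where f = "take (length c)"]) simp

lemma length_le_if_take_eq: "take n xs = ys \<Longrightarrow> length ys \<le> length xs"
  by auto

lemma take_Suc_length:
  "take (length b) c = b \<Longrightarrow> length b < length c \<Longrightarrow> take (Suc (length b)) c = b @ [c ! length b]"
  by (metis take_Suc_conv_app_nth)

lemma prefixA_bounds:
  assumes "prefixA a k c"
  shows "length c \<le> k - 1 \<and> (\<forall>j < length c. c ! j < a (k - j))"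
proof -
  obtain x where x: "inA a k x" "take (length c) x = c"
    using assms unfolding prefixA_def by blast
  from x(2) have "length c \<le> length x"
    by (rule length_le_if_take_eq)
  moreover have "c ! j = x ! j" if "j < length c" for j
    using x(2) that by (metis nth_take)
  ultimately show ?thesis
    using x(1) unfolding inA_def by auto
qed

lemma prefixA_iff:
  assumes pos: "\<forall>i \<in> {2..k}. a i > 0"
  shows "prefixA a k c \<longleftrightarrow> length c \<le> k - 1 \<and> (\<forall>j < length c. c ! j < a (k - j))"
proof
  assume c: "length c \<le> k - 1 \<and> (\<forall>j < length c. c ! j < a (k - j))"
  have "inA a k (c @ replicate (k - 1 - length c) 0)"
    unfolding inA_def
  proof (intro conjI allI impI)
    fix j assume j: "j < k - 1"
    then have "k - j \<in> {2..k}" by auto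
    then show "(c @ replicate (k - 1 - length c) 0) ! j < a (k - j)"
      using c pos j by (auto simp: nth_append)
  qed (use c in auto)
  then show "prefixA a k c"
    unfolding prefixA_def by (intro exI[of _ "c @ _"]) simp
qed (rule prefixA_bounds)

lemma prefixA_snocD:
  assumes "prefixA a k (c @ [i])"
  shows "length c + 2 \<le> k \<and> i < a (k - length c)"
proof -
  have "length c + 1 \<le> k - 1" "(c @ [i]) ! length c < a (k - length c)"
    using prefixA_bounds[OF assms] by auto
  then show ?thesis by simp
qed

lemma prefixA_snocI:
  assumes pos: "\<forall>i \<in> {2..k}. a i > 0"
    and "prefixA a k c" "length c + 2 \<le> k" "i < a (k - length c)"
  shows "prefixA a k (c @ [i])"
  using prefixA_bounds[OF assms(2)] assms(3,4)
  by (auto simp: prefixA_iff[OF pos] nth_append less_Suc_eq)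

lemma inA_iff_prefixA: "inA a k x \<longleftrightarrow> prefixA a k x \<and> length x = k - 1"
  unfolding prefixA_def inA_def by (metis order_refl take_all)

lemma nonempty_tuple_prefixA: "nonempty_tuple a k phi c \<Longrightarrow> prefixA a k c"
  unfolding nonempty_tuple_def prefixA_def by blast

lemma full_tuple_if_not_prefixA: "\<not> prefixA a k c \<Longrightarrow> full_tuple a k phi c"
  unfolding full_tuple_def prefixA_def by blast

lemma nonempty_tuple_if_full_tuple:
  "full_tuple a k phi c \<Longrightarrow> prefixA a k c \<Longrightarrow> nonempty_tuple a k phi c"
  unfolding nonempty_tuple_def full_tuple_def prefixA_def by blast

lemma tuple_inA:
  assumes "inA a k x"
  shows "(nonempty_tuple a k phi x \<longleftrightarrow> phi x) \<and> (full_tuple a k phi x \<longleftrightarrow> phi x)"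
proof -
  have "take (length x) y = x \<longleftrightarrow> y = x" if "inA a k y" for y
    using assms that unfolding inA_def by auto
  then show ?thesis
    using assms unfolding nonempty_tuple_def full_tuple_def by blast
qed

lemma nonempty_tuple_snoc: "nonempty_tuple a k phi (c @ [i]) \<Longrightarrow> nonempty_tuple a k phi c"
  unfolding nonempty_tuple_def using take_length_snoc by fastforce

lemma full_tuple_snoc: "full_tuple a k phi c \<Longrightarrow> full_tuple a k phi (c @ [i])"
  unfolding full_tuple_def using take_length_snoc by fastforce

lemma take_length_snoc_nth:
  assumes "inA a k y" "take (length c) y = c" "length c < k - 1"
  shows "take (length (c @ [y ! length c])) y = c @ [y ! length c]"
  using assms take_Suc_length[of c y] unfolding inA_def by simp

lemma nonempty_tuple_iff_children:
  assumes "length c < k - 1"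
  shows "nonempty_tuple a k phi c \<longleftrightarrow> (\<exists>i. nonempty_tuple a k phi (c @ [i]))"
  using take_length_snoc_nth[OF _ _ assms] nonempty_tuple_snoc
  unfolding nonempty_tuple_def by blast

lemma full_tuple_iff_children:
  assumes "length c < k - 1"
  shows "full_tuple a k phi c \<longleftrightarrow> (\<forall>i. full_tuple a k phi (c @ [i]))"
  using take_length_snoc_nth[OF _ _ assms] full_tuple_snoc
  unfolding full_tuple_def by blast

lemma nonempty_tuple_upd: "nonempty_tuple a k phi c \<Longrightarrow> nonempty_tuple a k (phi(x := True)) c"
  unfolding nonempty_tuple_def by (metis fun_upd_apply)

lemma full_tuple_upd: "full_tuple a k phi c \<Longrightarrow> full_tuple a k (phi(x := True)) c"
  unfolding full_tuple_def by (metis fun_upd_apply)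

lemma tuple_upd_outside:
  assumes "take (length c) x \<noteq> c"
  shows "(nonempty_tuple a k (phi(x := True)) c \<longleftrightarrow> nonempty_tuple a k phi c)
    \<and> (full_tuple a k (phi(x := True)) c \<longleftrightarrow> full_tuple a k phi c)"
  using assms unfolding nonempty_tuple_def full_tuple_def by (metis fun_upd_apply)

lemma full_tuple_upd_empty:
  assumes "2 \<le> a 2" "length c + 2 \<le> k" "prefixA a k c" "\<not> nonempty_tuple a k phi c"
  shows "\<not> full_tuple a k (phi(x := True)) c"
proof
  assume full: "full_tuple a k (phi(x := True)) c"
  have only_x: "y = x" if "inA a k y" "take (length c) y = c" for y
  proof -
    have "(phi(x := True)) y"
      using full that unfolding full_tuple_def by blast
    moreover have "\<not> phi y"
      using assms(4) that unfolding nonempty_tuple_def by blast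
    ultimately show "y = x"
      by (auto split: if_splits)
  qed
  obtain z where z: "inA a k z" "take (length c) z = c"
    using assms(3) unfolding prefixA_def by blast
  have last: "k - 2 < length z"
    using z(1) assms(2) unfolding inA_def by simp
  have "inA a k (z[k - 2 := v]) \<and> take (length c) (z[k - 2 := v]) = c" if "v < 2" for v
    using z assms(1,2) that unfolding inA_def by (auto simp: nth_list_update)
  then have "z[k - 2 := 0] = x" "z[k - 2 := 1] = x"
    using only_x by auto
  then have "z[k - 2 := 0] ! (k - 2) = z[k - 2 := 1] ! (k - 2)"
    by simp
  then show False
    using last by simp
qed

definition left_dominates ::
    "(nat \<Rightarrow> nat) \<Rightarrow> nat \<Rightarrow> (nat list \<Rightarrow> bool) \<Rightarrow> nat list \<Rightarrow> nat \<Rightarrow> bool" where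
  "left_dominates a k phi c j \<longleftrightarrow>
    (nonempty_tuple a k phi (c @ [Suc j]) \<longrightarrow> nonempty_tuple a k phi (c @ [j])) \<and>
    (full_tuple a k phi (c @ [Suc j]) \<longrightarrow> full_tuple a k phi (c @ [j]))"

text \<open>Only prefixes extending \<open>b\<close> are constrained: a call Next(\<open>b\<close>) may disorder siblings
  above \<open>b\<close>, and it is the enclosing call that restores order one level up.\<close>

definition siblings_monotone_below ::
    "(nat \<Rightarrow> nat) \<Rightarrow> nat \<Rightarrow> nat list \<Rightarrow> (nat list \<Rightarrow> bool) \<Rightarrow> bool" where
  "siblings_monotone_below a k b phi \<longleftrightarrow>
    (\<forall>c j. take (length b) c = b \<longrightarrow> prefixA a k (c @ [Suc j]) \<longrightarrow> left_dominates a k phi c j)"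

lemma left_dominates_upd_outside:
  assumes "take (Suc (length c)) x \<noteq> c @ [Suc j]" "left_dominates a k phi c j"
  shows "left_dominates a k (phi(x := True)) c j"
  using tuple_upd_outside[of "c @ [Suc j]" x a k phi] assms nonempty_tuple_upd full_tuple_upd
  unfolding left_dominates_def by (metis length_append_singleton)

lemma siblings_monotone_below_snoc:
  "siblings_monotone_below a k b phi \<Longrightarrow> siblings_monotone_below a k (b @ [i]) phi"
  unfolding siblings_monotone_below_def using take_length_snoc by (metis length_append_singleton)

lemma siblings_monotone_below_bottom:
  assumes "k \<le> length b + 1"
  shows "siblings_monotone_below a k b phi"
proof -
  have "\<not> prefixA a k (c @ [i])" if "take (length b) c = b" for c i
  proof
    assume "prefixA a k (c @ [i])"
    then have "length c + 2 \<le> k"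
      using prefixA_snocD by blast
    moreover have "length b \<le> length c"
      using that by (rule length_le_if_take_eq)
    ultimately show False
      using assms by simp
  qed
  then show ?thesis
    unfolding siblings_monotone_below_def by blast
qed

lemma siblings_monotone_below_upd:
  assumes below: "siblings_monotone_below a k b phi"
    and child: "siblings_monotone_below a k (b @ [m]) (phi(x := True))"
    and x: "take (Suc (length b)) x = b @ [m]"
    and left: "0 < m \<Longrightarrow> left_dominates a k (phi(x := True)) b (m - 1)"
  shows "siblings_monotone_below a k b (phi(x := True))"
  unfolding siblings_monotone_below_def
proof (intro allI impI)
  fix c j
  assume c: "take (length b) c = b" and pre: "prefixA a k (c @ [Suc j])"
  have old: "left_dominates a k phi c j"
    using below c pre unfolding siblings_monotone_below_def by blast
  show "left_dominates a k (phi(x := True)) c j"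
  proof (cases "length b < length c")
    case False
    then have "c = b"
      using c by simp
    then show ?thesis
      using left left_dominates_upd_outside[OF _ old] x by (cases "Suc j = m") auto
  next
    case True
    define i where "i = c ! length b"
    have ci: "take (Suc (length b)) c = b @ [i]"
      unfolding i_def using take_Suc_length[OF c True] .
    show ?thesis
    proof (cases "i = m")
      case True
      then show ?thesis
        using child ci pre unfolding siblings_monotone_below_def by simp
    next
      case False
      have "take (Suc (length c)) x \<noteq> c @ [Suc j]"
      proof
        assume xc: "take (Suc (length c)) x = c @ [Suc j]"
        have "take (Suc (length b)) x = take (Suc (length b)) (take (Suc (length c)) x)"
          using True by simp
        also have "\<dots> = take (Suc (length b)) c"
          using True by (simp add: xc)
        finally show False
          using x ci False by simp
      qed
      then show ?thesis
        using left_dominates_upd_outside[OF _ old] by blast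
    qed
  qed
qed

lemma next_call_upd:
  "next_call a k b phi phi' \<Longrightarrow> \<exists>x. phi' = phi(x := True) \<and> take (length b) x = b"
proof (induction rule: next_call.induct)
  case (base b m phi)
  show ?case
    by (intro exI[of _ "b @ [m]"]) simp
next
  case (step b m0 phi m phi')
  from step.IH obtain x where x: "phi' = phi(x := True)" "take (length (b @ [m])) x = b @ [m]"
    by blast
  have "take (length b) x = b"
    using take_length_snoc[of b x m] x(2) by simp
  with x(1) show ?case
    by blast
qed

lemma nonempty_tuple_before_least_empty:
  "m = (LEAST i. \<not> nonempty_tuple a k phi (b @ [i])) \<Longrightarrow> j < m \<Longrightarrow> nonempty_tuple a k phi (b @ [j])"
  using not_less_Least[of j "\<lambda>i. \<not> nonempty_tuple a k phi (b @ [i])"] by blast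

lemma left_dominates_upd_leaf:
  assumes "k - length b = 2" "m = (LEAST i. \<not> nonempty_tuple a k phi (b @ [i]))" "0 < m"
  shows "left_dominates a k (phi(x := True)) b (m - 1)"
proof -
  have "nonempty_tuple a k phi (b @ [m - 1])"
    using nonempty_tuple_before_least_empty[OF assms(2)] assms(3) by simp
  moreover have "inA a k (b @ [m - 1])"
    using calculation assms(1) by (simp add: inA_iff_prefixA nonempty_tuple_prefixA)
  ultimately show ?thesis
    using nonempty_tuple_upd tuple_inA unfolding left_dominates_def by blast
qed

lemma left_dominates_upd_least_empty:
  assumes m: "m = (LEAST i. \<not> nonempty_tuple a k phi (b @ [i]))" "0 < m" "m < a 2"
    and "prefixA a k (b @ [m])" "length b + 3 \<le> k"
  shows "left_dominates a k (phi(x := True)) b (m - 1)"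
proof -
  have "\<not> nonempty_tuple a k phi (b @ [a (k - length b)])"
    using nonempty_tuple_prefixA prefixA_snocD by blast
  then have "\<not> nonempty_tuple a k phi (b @ [m])"
    unfolding m(1) by (rule LeastI)
  then have "\<not> full_tuple a k (phi(x := True)) (b @ [m])"
    using full_tuple_upd_empty[of a "b @ [m]" k phi x] assms(2-5) by simp
  moreover have "nonempty_tuple a k (phi(x := True)) (b @ [m - 1])"
    using nonempty_tuple_before_least_empty[OF m(1)] nonempty_tuple_upd m(2) by simp
  ultimately show ?thesis
    unfolding left_dominates_def using m(2) by simp
qed

lemma left_dominates_upd_least_not_full:
  assumes pos: "\<forall>i \<in> {2..k}. a i > 0" and "prefixA a k b"
    and "\<exists>i. \<not> full_tuple a k phi (b @ [i])" "m = (LEAST i. \<not> full_tuple a k phi (b @ [i]))"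
  shows "prefixA a k (b @ [m]) \<and> (0 < m \<longrightarrow> left_dominates a k (phi(x := True)) b (m - 1))"
proof -
  have "\<not> full_tuple a k phi (b @ [m])"
    using LeastI_ex[OF assms(3)] assms(4) by simp
  then have prefix_m: "prefixA a k (b @ [m])"
    using full_tuple_if_not_prefixA by blast
  have "left_dominates a k (phi(x := True)) b (m - 1)" if "0 < m"
  proof -
    have "full_tuple a k phi (b @ [m - 1])"
      using not_less_Least[of "m - 1" "\<lambda>i. \<not> full_tuple a k phi (b @ [i])"] assms(4) that by simp
    moreover have "prefixA a k (b @ [m - 1])"
      using prefixA_snocI[OF pos assms(2)] prefixA_snocD[OF prefix_m]
      by (simp add: less_imp_diff_less)
    ultimately show ?thesis
      using nonempty_tuple_if_full_tuple nonempty_tuple_upd full_tuple_upd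
      unfolding left_dominates_def by blast
  qed
  with prefix_m show ?thesis
    by blast
qed

lemma next_call_siblings_monotone_below:
  assumes "next_call a k b phi phi'"
    and pos: "\<forall>i \<in> {2..k}. a i > 0"
    and a2_min: "\<forall>i \<in> {3..k}. a 2 \<le> a i"
  shows "prefixA a k b \<Longrightarrow> siblings_monotone_below a k b phi \<Longrightarrow> siblings_monotone_below a k b phi'"
  using assms(1)
proof (induction rule: next_call.induct)
  case (base b m phi)
  have "k \<le> length (b @ [m]) + 1"
    using base.hyps(1) by simp
  then show ?case
    by (rule siblings_monotone_below_upd[OF base.prems(2) siblings_monotone_below_bottom _
          left_dominates_upd_leaf[OF base.hyps]]) simp
next
  case (step b m0 phi m phi')
  from next_call_upd[OF step.hyps(5)] obtain x
    where x: "phi' = phi(x := True)" "take (Suc (length b)) x = b @ [m]"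
    by auto
  have "prefixA a k (b @ [m]) \<and> (0 < m \<longrightarrow> left_dominates a k (phi(x := True)) b (m - 1))"
  proof (cases "a 2 \<le> m0")
    case True
    then show ?thesis
      using left_dominates_upd_least_not_full[OF pos step.prems(1)] step.hyps(3,4) by simp
  next
    case False
    then have m: "m = m0" "m < a 2"
      using step.hyps(4) by simp_all
    have L: "k - length b \<in> {3..k}" "length b + 3 \<le> k"
      using step.hyps(1) by auto
    then have "a 2 \<le> a (k - length b)"
      using a2_min by blast
    then have "prefixA a k (b @ [m])"
      using prefixA_snocI[OF pos step.prems(1)] m(2) L(2) by simp
    moreover have "m = (LEAST i. \<not> nonempty_tuple a k phi (b @ [i]))"
      using step.hyps(2) m(1) by simp
    ultimately show ?thesis
      using left_dominates_upd_least_empty[of m a k phi b, OF _ _ m(2) _ L(2)] by blast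
  qed
  then have prefix_m: "prefixA a k (b @ [m])"
    and left: "0 < m \<Longrightarrow> left_dominates a k (phi(x := True)) b (m - 1)"
    by simp_all
  have "siblings_monotone_below a k (b @ [m]) phi'"
    using step.IH[OF prefix_m siblings_monotone_below_snoc[OF step.prems(2)]] .
  then show ?case
    unfolding x(1) by (rule siblings_monotone_below_upd[OF step.prems(2) _ x(2) left])
qed

lemma partial_listing_siblings_monotone:
  assumes pos: "\<forall>i \<in> {2..k}. a i > 0"
    and a2_min: "\<forall>i \<in> {3..k}. a 2 \<le> a i"
    and "partial_listing a k phi"
  shows "siblings_monotone_below a k [] phi"
proof -
  have "(next_call a k [])\<^sup>*\<^sup>* (\<lambda>_. False) phi"
    using assms(3) unfolding partial_listing_def .
  then show ?thesis
  proof (induction rule: rtranclp_induct)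
    case base
    have "\<not> nonempty_tuple a k (\<lambda>_. False) c" for c
      unfolding nonempty_tuple_def by simp
    moreover have "\<not> full_tuple a k (\<lambda>_. False) c" if "prefixA a k c" for c
      using that unfolding full_tuple_def prefixA_def by blast
    ultimately show ?case
      unfolding siblings_monotone_below_def left_dominates_def by blast
  next
    case (step phi phi')
    have "prefixA a k []"
      by (simp add: prefixA_iff[OF pos])
    with step.hyps(2) step.IH show ?case
      using next_call_siblings_monotone_below[OF _ pos a2_min] by blast
  qed
qed

lemma nonempty_tuple_iff_first_child:
  assumes mono: "siblings_monotone_below a k [] phi" and "length c < k - 1"
  shows "nonempty_tuple a k phi c \<longleftrightarrow> nonempty_tuple a k phi (c @ [0])"
proof
  assume "nonempty_tuple a k phi c"
  then obtain i where i: "nonempty_tuple a k phi (c @ [i])"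
    using nonempty_tuple_iff_children[OF assms(2)] by blast
  have "0 \<le> i"
    by simp
  then show "nonempty_tuple a k phi (c @ [0])"
  proof (induction rule: inc_induct)
    case base
    show ?case
      using i .
  next
    case (step n)
    then show ?case
      using mono nonempty_tuple_prefixA unfolding siblings_monotone_below_def left_dominates_def
      by simp
  qed
qed (rule nonempty_tuple_snoc)

lemma full_tuple_iff_last_child:
  assumes pos: "\<forall>i \<in> {2..k}. a i > 0" and mono: "siblings_monotone_below a k [] phi"
    and c: "prefixA a k c" "length c + 2 \<le> k"
  shows "full_tuple a k phi c \<longleftrightarrow> full_tuple a k phi (c @ [a (k - length c) - 1])"
proof
  assume last: "full_tuple a k phi (c @ [a (k - length c) - 1])"
  have "full_tuple a k phi (c @ [i])" for i
  proof (cases "i < a (k - length c)")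
    case True
    then have "i \<le> a (k - length c) - 1"
      by simp
    then show ?thesis
    proof (induction rule: inc_induct)
      case base
      show ?case
        using last .
    next
      case (step n)
      then have "prefixA a k (c @ [Suc n])"
        using prefixA_snocI[OF pos c] by simp
      then show ?case
        using mono step unfolding siblings_monotone_below_def left_dominates_def by simp
    qed
  next
    case False
    then show ?thesis
      using prefixA_snocD full_tuple_if_not_prefixA by fastforce
  qed
  then show "full_tuple a k phi c"
    using full_tuple_iff_children c(2) by simp
qed (rule full_tuple_snoc)

lemma nonempty_tuple_iff_first_element:
  assumes pos: "\<forall>i \<in> {2..k}. a i > 0" and mono: "siblings_monotone_below a k [] phi"
  shows "prefixA a k b \<Longrightarrow> length b + d = k - 1 \<Longrightarrow>
    nonempty_tuple a k phi b \<longleftrightarrow> phi (b @ replicate d 0)"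
proof (induction d arbitrary: b)
  case 0
  then show ?case
    using tuple_inA inA_iff_prefixA by simp
next
  case (Suc d)
  have "k - length b \<in> {2..k}"
    using Suc.prems(2) by auto
  then have "prefixA a k (b @ [0])"
    using prefixA_snocI[OF pos Suc.prems(1)] Suc.prems(2) pos by auto
  then show ?case
    using nonempty_tuple_iff_first_child[OF mono] Suc.IH[of "b @ [0]"] Suc.prems(2) by simp
qed

lemma full_tuple_iff_last_element:
  assumes pos: "\<forall>i \<in> {2..k}. a i > 0" and mono: "siblings_monotone_below a k [] phi"
  shows "prefixA a k b \<Longrightarrow> length b + d = k - 1 \<Longrightarrow>
    full_tuple a k phi b \<longleftrightarrow> phi (b @ map (\<lambda>i. a i - 1) (rev [2..<d + 2]))"
proof (induction d arbitrary: b)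
  case 0
  then show ?case
    using tuple_inA inA_iff_prefixA by simp
next
  case (Suc d)
  have L: "k - length b = d + 2"
    using Suc.prems(2) by simp
  with pos have "0 < a (d + 2)"
    by auto
  then have "prefixA a k (b @ [a (d + 2) - 1])"
    using prefixA_snocI[OF pos Suc.prems(1)] Suc.prems(2) L by simp
  then show ?case
    using full_tuple_iff_last_child[OF pos mono Suc.prems(1)] Suc.IH[of "b @ [a (d + 2) - 1]"]
      Suc.prems(2) L by simp
qed

theorem corollary1:
  fixes a :: "nat \<Rightarrow> nat" and k l :: nat and phi :: "nat list \<Rightarrow> bool" and b :: "nat list"
  assumes "k \<ge> 2"
    and "\<forall>i \<in> {2..k}. a i > 0"
    and "\<forall>i \<in> {3..k}. a 2 \<le> a i"
    and "partial_listing a k phi"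
    and "2 \<le> l + 1" and "l + 1 \<le> k"
    and "\<exists>x. inA a k x \<and> take (k - l) x = b"
  shows "(nonempty_tuple a k phi b \<longleftrightarrow> phi (b @ replicate (l - 1) 0))
       \<and> (full_tuple a k phi b \<longleftrightarrow> phi (b @ map (\<lambda>i. a i - 1) (rev [2..<l + 1])))"
proof -
  obtain x where x: "inA a k x" "take (k - l) x = b"
    using assms(7) by blast
  have "length b = k - l"
    using x assms(5,6) unfolding inA_def by auto
  then have prefix: "prefixA a k b" and len: "length b + (l - 1) = k - 1"
    using x assms(5,6) unfolding prefixA_def by auto
  have mono: "siblings_monotone_below a k [] phi"
    using partial_listing_siblings_monotone[OF assms(2,3,4)] .
  have "l - 1 + 2 = l + 1"
    using assms(5) by simp
  then show ?thesis
    using nonempty_tuple_iff_first_element[OF assms(2) mono prefix len]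
      full_tuple_iff_last_element[OF assms(2) mono prefix len] by simp
qed

end
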